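(* Let $n,d,d_k$ be positive integers, $X\in\mathbb{R}^{n\times d}$, $W_Q,W_K\in\mathbb{R}^{d\times d_k}$, $E\in\mathbb{R}^{n\times n}$, and let $P\in\mathbb{R}^{d\times d}$ be an orthogonal projector. Put $B=W_QW_K^\top$, $X_P=XP$, $G_Q=X^\top E X W_K/\sqrt{d_k}$, $G_K=X^\top E^\top X W_Q/\sqrt{d_k}$, and for $\eta_Q,\eta_K\ge0$ let $B^+=(W_Q-\eta_QG_Q)(W_K-\eta_KG_K)^\top$ and $\Delta Z_P=X_P P(B^+-B)P X_P^\top/\sqrt{d_k}$. Then for $S\in\{Q,K\}$, $$\|XW_SW_S^\top P\|_F\le\|X\|_F\|W_S\|_{\mathrm{op}}^2,$$ and consequently $$\|\Delta Z_P\|_F\le\frac{\|E\|_{\mathrm{op}}\|X\|_F}{d_k}\Big(\eta_Q\|W_K\|_{\mathrm{op}}^2+\eta_K\|W_Q\|_{\mathrm{op}}^2\Big)\|X_P\|_{\mathrm{op}}^2\|X_P\|_F+R_2,$$ where $R_2=\eta_Q\eta_K\|X_P\|_{\mathrm{op}}^2\|X_P\|_F^2\|E\|_{\mathrm{op}}^2\|XW_K\|_F\|XW_Q\|_F/d_k^{3/2}$.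
   Context: $\|\cdot\|_F$ is the Frobenius norm, $\|\cdot\|_{\mathrm{op}}$ the spectral norm; an orthogonal projector satisfies $P=P^\top=P^2$. *)

theory Defs
  imports "HOL-Analysis.Analysis"
begin

definition frob_norm :: "real^'n^'m \<Rightarrow> real" where
  "frob_norm A = sqrt (\<Sum>i\<in>UNIV. \<Sum>j\<in>UNIV. (A $ i $ j)^2)"

definition op_norm :: "real^'n^'m \<Rightarrow> real" where
  "op_norm A = onorm (\<lambda>x. A *v x)"

definition orth_projector :: "real^'n^'n \<Rightarrow> bool" where
  "orth_projector P \<longleftrightarrow> transpose P = P \<and> P ** P = P"

end

theory Submission
  imports Defs
begin

text \<open>
  The Frobenius norm is sub-multiplicative against the operator norm,
  \<open>\<parallel>AB\<parallel>\<^sub>F \<le> \<parallel>A\<parallel>\<^sub>F \<parallel>B\<parallel>\<^sub>o\<^sub>p\<close> and \<open>\<parallel>AB\<parallel>\<^sub>F \<le> \<parallel>A\<parallel>\<^sub>o\<^sub>p \<parallel>B\<parallel>\<^sub>F\<close>, and an orthogonal projector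
  has operator norm at most 1; this gives the first bound.
  With \<open>M = X\<^sup>T E X\<close>, the update \<open>B\<^sup>+ - B\<close> is a combination of \<open>W\<^sub>Q W\<^sub>Q\<^sup>T M\<close>,
  \<open>M W\<^sub>K W\<^sub>K\<^sup>T\<close> and \<open>M W\<^sub>K W\<^sub>Q\<^sup>T M\<close>. Because \<open>P = P\<^sup>T = P\<^sup>2\<close> we have \<open>X P X\<^sup>T = X\<^sub>P X\<^sub>P\<^sup>T\<close>,
  so after sandwiching between \<open>X\<^sub>P P\<close> and \<open>P X\<^sub>P\<^sup>T\<close> each term becomes a product of
  Gram factors \<open>X\<^sub>P X\<^sub>P\<^sup>T E\<close> or \<open>E X\<^sub>P X\<^sub>P\<^sup>T\<close> (operator norm \<open>\<le> \<parallel>X\<^sub>P\<parallel>\<^sub>o\<^sub>p\<^sup>2 \<parallel>E\<parallel>\<^sub>o\<^sub>p\<close>) around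
  \<open>X W\<^sub>S W\<^sub>S\<^sup>T P\<close> or \<open>(X W\<^sub>K)(X W\<^sub>Q)\<^sup>T\<close>; the triangle inequality finishes.
\<close>

lemma frob_norm_eq_norm: "frob_norm A = norm A"
proof -
  have "(norm A)\<^sup>2 = (\<Sum>i\<in>UNIV. \<Sum>j\<in>UNIV. (A $ i $ j)\<^sup>2)"
    by (simp add: norm_vec_def L2_set_def sum_nonneg)
  then show ?thesis
    unfolding frob_norm_def by (metis norm_ge_zero real_sqrt_unique)
qed

lemma norm_matrix_squared: "(norm (A::real^'n^'m))\<^sup>2 = (\<Sum>i\<in>UNIV. (norm (A $ i))\<^sup>2)"
  by (simp add: norm_vec_def L2_set_def sum_nonneg)

lemma inner_matrix_vector_mult_transpose:
  "inner (A *v x) y = inner x (transpose A *v (y::real^'m))"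
  by (metis dot_lmul_matrix vector_transpose_matrix)

lemma norm_matrix_vector_mult_le: "norm (A *v x) \<le> op_norm A * norm x"
  unfolding op_norm_def by (rule onorm[OF matrix_vector_mul_bounded_linear])

lemma op_norm_nonneg: "0 \<le> op_norm A"
  unfolding op_norm_def by (rule onorm_pos_le[OF matrix_vector_mul_bounded_linear])

lemma op_norm_le: "(\<And>x. norm (A *v x) \<le> b * norm x) \<Longrightarrow> op_norm (A::real^'n^'m) \<le> b"
  unfolding op_norm_def by (rule onorm_le)

lemma op_norm_mult_le: "op_norm (A ** B) \<le> op_norm A * op_norm (B::real^'p^'n)"
  using onorm_compose[OF matrix_vector_mul_bounded_linear matrix_vector_mul_bounded_linear, of A B]
  by (simp add: op_norm_def o_def matrix_vector_mul_assoc)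

lemma op_norm_transpose_le: "op_norm (transpose A) \<le> op_norm (A::real^'n^'m)"
proof (rule op_norm_le)
  fix y :: "real^'m"
  let ?z = "transpose A *v y"
  have "(norm ?z)\<^sup>2 = inner (A *v ?z) y"
    by (simp add: power2_norm_eq_inner inner_matrix_vector_mult_transpose)
  also have "\<dots> \<le> norm (A *v ?z) * norm y"
    by (rule norm_cauchy_schwarz)
  also have "\<dots> \<le> op_norm A * norm ?z * norm y"
    by (simp add: norm_matrix_vector_mult_le mult_right_mono)
  finally show "norm ?z \<le> op_norm A * norm y"
    by (cases "?z = 0") (simp_all add: op_norm_nonneg power2_eq_square mult_ac)
qed

lemma op_norm_transpose: "op_norm (transpose A) = op_norm (A::real^'n^'m)"
  using op_norm_transpose_le[of A] op_norm_transpose_le[of "transpose A"] by simp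

lemma op_norm_le_norm: "op_norm (A::real^'n^'m) \<le> norm A"
proof (rule op_norm_le)
  fix x :: "real^'n"
  have "(norm (A *v x))\<^sup>2 = (\<Sum>i\<in>UNIV. (inner (A $ i) x)\<^sup>2)"
    by (simp add: norm_vec_def L2_set_def sum_nonneg matrix_vector_mult_def inner_vec_def)
  also have "\<dots> \<le> (\<Sum>i\<in>UNIV. (norm (A $ i) * norm x)\<^sup>2)"
    by (intro sum_mono) (metis Cauchy_Schwarz_ineq2 abs_ge_zero power2_abs power_mono)
  also have "\<dots> = (norm A * norm x)\<^sup>2"
    by (simp add: norm_matrix_squared power_mult_distrib sum_distrib_right)
  finally show "norm (A *v x) \<le> norm A * norm x"
    by (rule power2_le_imp_le) simp
qed

lemma op_norm_orth_projector_le: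
  assumes "orth_projector P"
  shows "op_norm P \<le> 1"
proof (rule op_norm_le)
  fix x
  have "(norm (P *v x))\<^sup>2 = inner x (P *v x)"
    using assms by (simp add: power2_norm_eq_inner inner_matrix_vector_mult_transpose
        orth_projector_def matrix_vector_mul_assoc)
  also have "\<dots> \<le> norm x * norm (P *v x)"
    by (rule norm_cauchy_schwarz)
  finally show "norm (P *v x) \<le> 1 * norm x"
    by (cases "P *v x = 0") (simp_all add: power2_eq_square)
qed

lemma norm_matrix_mult_le_right: "norm (A ** B) \<le> norm A * op_norm (B::real^'p^'n)"
proof -
  have row: "(A ** B) $ i = transpose B *v (A $ i)" for i
    by (simp add: vec_eq_iff matrix_matrix_mult_def matrix_vector_mult_def transpose_def mult.commute)
  have "(norm (A ** B))\<^sup>2 \<le> (\<Sum>i\<in>UNIV. (op_norm B * norm (A $ i))\<^sup>2)"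
    unfolding norm_matrix_squared row
    using norm_matrix_vector_mult_le[of "transpose B"]
    by (intro sum_mono power_mono) (simp_all add: op_norm_transpose)
  also have "\<dots> = (norm A * op_norm B)\<^sup>2"
    by (simp add: norm_matrix_squared power_mult_distrib sum_distrib_left mult.commute)
  finally show ?thesis
    by (rule power2_le_imp_le) (simp add: op_norm_nonneg)
qed

lemma norm_transpose_matrix: "norm (transpose (A::real^'n^'m)) = norm A"
proof -
  have "frob_norm (transpose A) = frob_norm A"
    unfolding frob_norm_def transpose_def by (simp, subst sum.swap) (rule refl)
  then show ?thesis
    by (simp add: frob_norm_eq_norm)
qed

lemma norm_matrix_mult_le_left: "norm (A ** B) \<le> op_norm A * norm (B::real^'p^'n)"
  using norm_matrix_mult_le_right[of "transpose B" "transpose A"]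
  by (simp add: norm_transpose_matrix op_norm_transpose matrix_transpose_mul[symmetric] mult.commute)

lemma norm_matrix_mult_le: "norm (A ** B) \<le> norm A * norm (B::real^'p^'n)"
  by (rule order_trans[OF norm_matrix_mult_le_right mult_left_mono[OF op_norm_le_norm norm_ge_zero]])

lemma norm_matrix_sandwich_le:
  assumes "op_norm A \<le> a" and "norm Y \<le> y" and "op_norm B \<le> b"
  shows "norm (A ** Y ** B) \<le> a * y * b"
proof -
  have "0 \<le> a" "0 \<le> y"
    using assms(1,2) op_norm_nonneg[of A] norm_ge_zero[of Y] by linarith+
  have "norm (A ** Y ** B) \<le> op_norm A * norm Y * op_norm B"
    by (rule order_trans[OF norm_matrix_mult_le_right
          mult_right_mono[OF norm_matrix_mult_le_left op_norm_nonneg]])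
  also have "\<dots> \<le> a * y * b"
    using assms \<open>0 \<le> a\<close> \<open>0 \<le> y\<close> by (intro mult_mono) (simp_all add: op_norm_nonneg)
  finally show ?thesis .
qed

lemma op_norm_gram_le: "op_norm (A ** transpose A) \<le> (op_norm A)\<^sup>2"
  using op_norm_mult_le[of A "transpose A"] by (simp add: op_norm_transpose power2_eq_square)

lemma norm_gram_mult_contraction_le:
  assumes "op_norm P \<le> 1"
  shows "norm (X ** W ** transpose W ** P) \<le> norm X * (op_norm W)\<^sup>2"
proof -
  have "op_norm (W ** transpose W ** P) \<le> (op_norm W)\<^sup>2 * 1"
    by (rule order_trans[OF op_norm_mult_le
          mult_mono[OF op_norm_gram_le assms zero_le_power2 op_norm_nonneg]])
  then show ?thesis
    using order_trans[OF norm_matrix_mult_le_right[of X "W ** transpose W ** P"]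
        mult_left_mono[OF _ norm_ge_zero]]
    by (simp add: matrix_mul_assoc)
qed

lemma op_norm_gram_mult_left_le: "op_norm (A ** transpose A ** E) \<le> (op_norm A)\<^sup>2 * op_norm E"
  by (rule order_trans[OF op_norm_mult_le mult_right_mono[OF op_norm_gram_le op_norm_nonneg]])

lemma op_norm_gram_mult_right_le: "op_norm (E ** A ** transpose A) \<le> op_norm E * (op_norm A)\<^sup>2"
  unfolding matrix_mul_assoc[symmetric]
  by (rule order_trans[OF op_norm_mult_le mult_left_mono[OF op_norm_gram_le op_norm_nonneg]])

lemma norm_gram_sandwich_left_le:
  "norm (A ** transpose A ** E ** Y ** transpose A) \<le> (op_norm A)\<^sup>2 * norm A * op_norm E * norm Y"
proof -
  have "op_norm (transpose A) \<le> norm A"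
    by (simp add: op_norm_transpose op_norm_le_norm)
  from norm_matrix_sandwich_le[OF op_norm_gram_mult_left_le[of A E] order_refl this]
  show ?thesis
    by (simp add: mult_ac)
qed

lemma norm_gram_sandwich_right_le:
  "norm (A ** transpose Y ** (E ** A ** transpose A)) \<le> (op_norm A)\<^sup>2 * norm A * op_norm E * norm Y"
  using norm_matrix_sandwich_le[OF op_norm_le_norm order_refl op_norm_gram_mult_right_le, of A "transpose Y"]
  by (simp add: norm_transpose_matrix mult_ac)

lemma norm_gram_sandwich_both_le:
  "norm (A ** transpose A ** E ** (U ** transpose V) ** (E ** A ** transpose A))
    \<le> (op_norm A)\<^sup>2 * (norm A)\<^sup>2 * (op_norm E)\<^sup>2 * (norm U * norm V)"
proof -
  have "op_norm E * (op_norm A)\<^sup>2 \<le> op_norm E * (norm A)\<^sup>2"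
    by (intro mult_left_mono power_mono op_norm_le_norm op_norm_nonneg)
  then have right: "op_norm (E ** A ** transpose A) \<le> op_norm E * (norm A)\<^sup>2"
    using op_norm_gram_mult_right_le order_trans by blast
  have middle: "norm (U ** transpose V) \<le> norm U * norm V"
    using norm_matrix_mult_le[of U "transpose V"] by (simp add: norm_transpose_matrix)
  show ?thesis
    by (rule order_trans[OF norm_matrix_sandwich_le[OF op_norm_gram_mult_left_le[of A E] middle right]])
      (simp add: power2_eq_square mult_ac)
qed

lemma matrix_diff_ldistrib: "A ** (B - C) = A ** B - A ** (C::'a::ring_1^'p^'n)"
  by (simp add: matrix_matrix_mult_def vec_eq_iff algebra_simps sum_subtractf)

lemma matrix_diff_rdistrib: "(A - B) ** C = A ** C - B ** (C::'a::ring_1^'p^'n)"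
  by (simp add: matrix_matrix_mult_def vec_eq_iff algebra_simps sum_subtractf)

lemma matrix_add_rdistrib: "(A + B) ** C = A ** C + B ** (C::'a::semiring_1^'p^'n)"
  by (simp add: matrix_matrix_mult_def vec_eq_iff algebra_simps sum.distrib)

lemma transpose_diff: "transpose (A - B) = transpose A - transpose (B::'a::ab_group_add^'n^'m)"
  by (simp add: transpose_def vec_eq_iff)

lemma perturbed_mult_transpose_diff:
  fixes A C :: "real^'k^'m" and B D :: "real^'k^'n"
  shows "(A - a *\<^sub>R C) ** transpose (B - b *\<^sub>R D) - A ** transpose B
    = (- b) *\<^sub>R (A ** transpose D) - a *\<^sub>R (C ** transpose B) + (a * b) *\<^sub>R (C ** transpose D)"
  by (simp add: transpose_diff transpose_scalar matrix_diff_ldistrib matrix_diff_rdistrib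
      matrix_scalar_ac scalar_matrix_assoc[symmetric] algebra_simps)

lemma projected_attention_update_eq:
  fixes X :: "real^'d^'n" and W_Q W_K :: "real^'k^'d" and E :: "real^'n^'n" and s :: real
  assumes "orth_projector P"
  defines "XP \<equiv> X ** P"
    and "G_Q \<equiv> s *\<^sub>R (transpose X ** E ** X ** W_K)"
    and "G_K \<equiv> s *\<^sub>R (transpose X ** transpose E ** X ** W_Q)"
  shows "XP ** P ** ((W_Q - eta_Q *\<^sub>R G_Q) ** transpose (W_K - eta_K *\<^sub>R G_K)
            - W_Q ** transpose W_K) ** P ** transpose XP
    = (- (eta_K * s)) *\<^sub>R (XP ** transpose (X ** W_Q ** transpose W_Q ** P) ** (E ** XP ** transpose XP))
      - (eta_Q * s) *\<^sub>R (XP ** transpose XP ** E ** (X ** W_K ** transpose W_K ** P) ** transpose XP)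
      + (eta_Q * s * (eta_K * s)) *\<^sub>R
          (XP ** transpose XP ** E ** (X ** W_K ** transpose (X ** W_Q)) ** (E ** XP ** transpose XP))"
proof -
  have PT: "transpose P = P" and PP: "P ** P = P"
    using assms(1) by (auto simp: orth_projector_def)
  have absorb: "A ** P ** P = A ** P" for A :: "real^'d^'a"
    by (metis PP matrix_mul_assoc)
  show ?thesis
    unfolding G_Q_def G_K_def scaleR_scaleR perturbed_mult_transpose_diff XP_def
    by (simp add: matrix_diff_ldistrib matrix_diff_rdistrib matrix_add_ldistrib matrix_add_rdistrib
        matrix_scalar_ac scalar_matrix_assoc[symmetric] matrix_transpose_mul transpose_scalar
        matrix_mul_assoc PT absorb
        del: scaleR_minus_left) \<comment> \<open>keep \<open>- b\<close> a scalar, so that it moves through matrix products\<close>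
qed

lemma norm_attention_update_le:
  fixes X :: "real^'d^'n" and W_Q W_K :: "real^'k^'d" and E :: "real^'n^'n"
    and P :: "real^'d^'d" and eta_Q eta_K dk :: real
  assumes P: "orth_projector P" and "0 \<le> eta_Q" and "0 \<le> eta_K" and "0 < dk"
  defines "XP \<equiv> X ** P"
    and "G_Q \<equiv> (1 / sqrt dk) *\<^sub>R (transpose X ** E ** X ** W_K)"
    and "G_K \<equiv> (1 / sqrt dk) *\<^sub>R (transpose X ** transpose E ** X ** W_Q)"
  shows "norm ((1 / sqrt dk) *\<^sub>R (XP ** P ** ((W_Q - eta_Q *\<^sub>R G_Q) ** transpose (W_K - eta_K *\<^sub>R G_K)
              - W_Q ** transpose W_K) ** P ** transpose XP))
    \<le> op_norm E * norm X / dk * (eta_Q * (op_norm W_K)\<^sup>2 + eta_K * (op_norm W_Q)\<^sup>2)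
        * (op_norm XP)\<^sup>2 * norm XP
      + eta_Q * eta_K * (op_norm XP)\<^sup>2 * (norm XP)\<^sup>2 * (op_norm E)\<^sup>2
        * norm (X ** W_K) * norm (X ** W_Q) / dk powr (3/2)"
    (is "norm ?DZ \<le> ?bound")
proof -
  define s where "s = 1 / sqrt dk"
  define T1 where "T1 = XP ** transpose XP ** E ** (X ** W_K ** transpose W_K ** P) ** transpose XP"
  define T2 where "T2 = XP ** transpose (X ** W_Q ** transpose W_Q ** P) ** (E ** XP ** transpose XP)"
  define T3 where "T3 = XP ** transpose XP ** E ** (X ** W_K ** transpose (X ** W_Q)) ** (E ** XP ** transpose XP)"
  define c e f where "c = op_norm XP" and "e = op_norm E" and "f = norm XP"
  have update: "?DZ = s *\<^sub>R ((- (eta_K * s)) *\<^sub>R T2 - (eta_Q * s) *\<^sub>R T1 + (eta_Q * s * (eta_K * s)) *\<^sub>R T3)"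
    unfolding T1_def T2_def T3_def s_def XP_def G_Q_def G_K_def projected_attention_update_eq[OF P] ..
  have contraction: "norm (X ** W ** transpose W ** P) \<le> norm X * (op_norm W)\<^sup>2" for W :: "real^'k^'d"
    by (rule norm_gram_mult_contraction_le[OF op_norm_orth_projector_le[OF P]])
  have "0 \<le> c\<^sup>2 * f * e"
    unfolding c_def e_def f_def by (simp add: op_norm_nonneg)
  then have T1: "norm T1 \<le> c\<^sup>2 * f * e * (norm X * (op_norm W_K)\<^sup>2)"
    and T2: "norm T2 \<le> c\<^sup>2 * f * e * (norm X * (op_norm W_Q)\<^sup>2)"
    unfolding T1_def T2_def c_def e_def f_def
    by (meson norm_gram_sandwich_left_le norm_gram_sandwich_right_le contraction
        mult_left_mono order_trans)+
  have T3: "norm T3 \<le> c\<^sup>2 * f\<^sup>2 * e\<^sup>2 * (norm (X ** W_K) * norm (X ** W_Q))"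
    unfolding T3_def c_def e_def f_def by (rule norm_gram_sandwich_both_le)
  have "0 \<le> s"
    using \<open>0 < dk\<close> by (simp add: s_def)
  have s_sq: "s * s = 1 / dk"
    using \<open>0 < dk\<close> by (simp add: s_def)
  have "dk powr (3/2) = dk * sqrt dk"
    using powr_add[of dk 1 "1/2"] \<open>0 < dk\<close> by (simp add: powr_half_sqrt)
  then have s_cube: "s * s * s = 1 / dk powr (3/2)"
    using \<open>0 < dk\<close> by (simp add: s_def)
  have triangle: "norm ((- (eta_K * s)) *\<^sub>R T2 - (eta_Q * s) *\<^sub>R T1 + (eta_Q * s * (eta_K * s)) *\<^sub>R T3)
      \<le> eta_K * s * norm T2 + eta_Q * s * norm T1 + eta_Q * s * (eta_K * s) * norm T3"
    using assms(2,3) \<open>0 \<le> s\<close>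
    by (smt (verit) norm_scaleR norm_triangle_ineq norm_triangle_ineq4 abs_of_nonneg mult_nonneg_nonneg)
  have "norm ?DZ = s * norm ((- (eta_K * s)) *\<^sub>R T2 - (eta_Q * s) *\<^sub>R T1 + (eta_Q * s * (eta_K * s)) *\<^sub>R T3)"
    unfolding update using \<open>0 \<le> s\<close> by simp
  also have "\<dots> \<le> s * (eta_K * s * norm T2 + eta_Q * s * norm T1 + eta_Q * s * (eta_K * s) * norm T3)"
    by (rule mult_left_mono[OF triangle \<open>0 \<le> s\<close>])
  also have "\<dots> = (s * s) * (eta_K * norm T2 + eta_Q * norm T1) + (s * s * s) * (eta_Q * eta_K * norm T3)"
    by (simp add: algebra_simps)
  also have "\<dots> \<le> (s * s) * (eta_K * (c\<^sup>2 * f * e * (norm X * (op_norm W_Q)\<^sup>2))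
        + eta_Q * (c\<^sup>2 * f * e * (norm X * (op_norm W_K)\<^sup>2)))
      + (s * s * s) * (eta_Q * eta_K * (c\<^sup>2 * f\<^sup>2 * e\<^sup>2 * (norm (X ** W_K) * norm (X ** W_Q))))"
    using T1 T2 T3 assms(2,3) \<open>0 \<le> s\<close>
    by (intro add_mono mult_left_mono mult_nonneg_nonneg) simp_all
  also have "\<dots> = ?bound"
    unfolding s_cube unfolding s_sq c_def e_def f_def
    by (simp add: field_simps power2_eq_square)
  finally show ?thesis .
qed

theorem corollary1:
  fixes X :: "real^'d^'n" and W_Q W_K :: "real^'k^'d" and E :: "real^'n^'n"
    and P :: "real^'d^'d" and eta_Q eta_K :: real
  assumes "orth_projector P" and "eta_Q \<ge> 0" and "eta_K \<ge> 0"
  shows "let dk = real CARD('k);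
             B = W_Q ** transpose W_K;
             XP = X ** P;
             G_Q = (1 / sqrt dk) *\<^sub>R (transpose X ** E ** X ** W_K);
             G_K = (1 / sqrt dk) *\<^sub>R (transpose X ** transpose E ** X ** W_Q);
             Bp = (W_Q - eta_Q *\<^sub>R G_Q) ** transpose (W_K - eta_K *\<^sub>R G_K);
             DZ = (1 / sqrt dk) *\<^sub>R (XP ** P ** (Bp - B) ** P ** transpose XP);
             R2 = eta_Q * eta_K * (op_norm XP)^2 * (frob_norm XP)^2 * (op_norm E)^2
                  * frob_norm (X ** W_K) * frob_norm (X ** W_Q) / dk powr (3/2)
         in frob_norm (X ** W_Q ** transpose W_Q ** P) \<le> frob_norm X * (op_norm W_Q)^2
          \<and> frob_norm (X ** W_K ** transpose W_K ** P) \<le> frob_norm X * (op_norm W_K)^2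
          \<and> frob_norm DZ \<le> op_norm E * frob_norm X / dk
               * (eta_Q * (op_norm W_K)^2 + eta_K * (op_norm W_Q)^2)
               * (op_norm XP)^2 * frob_norm XP + R2"
proof -
  have dk_pos: "0 < real CARD('k)"
    by simp
  note contraction = norm_gram_mult_contraction_le[OF op_norm_orth_projector_le[OF assms(1)]]
  show ?thesis
    using contraction[of X W_Q] contraction[of X W_K] norm_attention_update_le[OF assms dk_pos]
    unfolding Let_def frob_norm_eq_norm by simp
qed

end
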